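(* Let $\mathcal{A}=\{H_i=\{v:\langle\alpha_i,v\rangle=0\}:i=1,\dots,m\}$ be a linear hyperplane arrangement in $\mathbb{R}^n$, $U\in\mathrm{Gr}(k,n)$ with $\dim(U\cap T)=l$, and $I\subseteq[m]$. The following are equivalent: (1) $I$ is a basis of the matroid $\mathfrak{M}_{\mathcal{A}}(U)$; (2) $|I|=k-l$ and $\{\beta_i:i\in I\}$ is linearly independent; (3) $|I|=k-l$ and $\bigcap_{i\in I}H_i\in L_U(\mathcal{A})$.
   Context: $\alpha_i\ne0$, $T=\bigcap_{i=1}^mH_i$, $\beta_i$ is the orthogonal projection of $\alpha_i$ onto $U$, and $\mathfrak{M}_{\mathcal{A}}(U)$ is the matroid on $[m]$ with rank function $\operatorname{rk}(I)=\dim\operatorname{span}\{\beta_i:i\in I\}$. $L(\mathcal{A})$ is the set of intersections of subfamilies of $\mathcal{A}$ (including $\mathbb{R}^n$), $L_j(\mathcal{A})$ those of codimension $j$. For $U$ with $\dim(U\cap T)=l$, $L_U(\mathcal{A}):=\{X\in L_{k-l}(\mathcal{A}): X\oplus(U\cap(U^\perp+T^\perp))=\mathbb{R}^n\}$ (equivalently, those $X\in L_{k-l}(\mathcal{A})$ with $\Delta(U\cap(U^\perp+T^\perp))\notin H(X)$, where $\Delta$ denotes Plücker coordinates and $H(X)=\{x\in\mathbb{R}^{\binom{[n]}{k-l}}:\sum_I(-1)^{(k-l)(k-l+1)/2+\sum_{i\in I}i}\Delta_{[n]\setminus I}(X)x_I=0\}$). *)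

theory Defs
  imports "HOL-Analysis.Analysis"
begin

text \<open>Arrangement in the euclidean space 'a (of dimension n = DIM('a)) given by normal
  vectors alpha i, i in [m] = {1..m}; H_i = {v. alpha i . v = 0}.\<close>

definition hyp :: "(nat \<Rightarrow> 'a::euclidean_space) \<Rightarrow> nat \<Rightarrow> 'a set" where
  "hyp \<alpha> i = {v. \<alpha> i \<bullet> v = 0}"

definition flat :: "(nat \<Rightarrow> 'a::euclidean_space) \<Rightarrow> nat set \<Rightarrow> 'a set" where
  "flat \<alpha> J = (\<Inter>i\<in>J. hyp \<alpha> i)"

definition centre :: "(nat \<Rightarrow> 'a::euclidean_space) \<Rightarrow> nat \<Rightarrow> 'a set" where
  "centre \<alpha> m = flat \<alpha> {1..m}"

definition int_lattice :: "(nat \<Rightarrow> 'a::euclidean_space) \<Rightarrow> nat \<Rightarrow> 'a set set" where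
  "int_lattice \<alpha> m = {flat \<alpha> J | J. J \<subseteq> {1..m}}"

definition int_lattice_codim :: "(nat \<Rightarrow> 'a::euclidean_space) \<Rightarrow> nat \<Rightarrow> nat \<Rightarrow> 'a set set" where
  "int_lattice_codim \<alpha> m j = {X \<in> int_lattice \<alpha> m. DIM('a) - dim X = j}"

definition proj_vec :: "'a::euclidean_space set \<Rightarrow> (nat \<Rightarrow> 'a) \<Rightarrow> nat \<Rightarrow> 'a" where
  "proj_vec U \<alpha> i = closest_point U (\<alpha> i)"

definition mrank :: "'a::euclidean_space set \<Rightarrow> (nat \<Rightarrow> 'a) \<Rightarrow> nat set \<Rightarrow> nat" where
  "mrank U \<alpha> I = dim (span (proj_vec U \<alpha> ` I))"

definition mindep :: "'a::euclidean_space set \<Rightarrow> (nat \<Rightarrow> 'a) \<Rightarrow> nat \<Rightarrow> nat set \<Rightarrow> bool" where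
  "mindep U \<alpha> m I \<longleftrightarrow> I \<subseteq> {1..m} \<and> mrank U \<alpha> I = card I"

definition mbasis :: "'a::euclidean_space set \<Rightarrow> (nat \<Rightarrow> 'a) \<Rightarrow> nat \<Rightarrow> nat set \<Rightarrow> bool" where
  "mbasis U \<alpha> m I \<longleftrightarrow> mindep U \<alpha> m I \<and>
     (\<forall>J. mindep U \<alpha> m J \<and> I \<subseteq> J \<longrightarrow> J = I)"

definition family_indep :: "(nat \<Rightarrow> 'a::real_vector) \<Rightarrow> nat set \<Rightarrow> bool" where
  "family_indep \<beta> I \<longleftrightarrow> inj_on \<beta> I \<and> independent (\<beta> ` I)"

definition direct_sum_whole :: "'a::real_vector set \<Rightarrow> 'a set \<Rightarrow> bool" where
  "direct_sum_whole X W \<longleftrightarrow> X \<inter> W = {0} \<and> {x + w | x w. x \<in> X \<and> w \<in> W} = UNIV"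

definition subspace_sum :: "'a::real_vector set \<Rightarrow> 'a set \<Rightarrow> 'a set" where
  "subspace_sum A B = {a + b | a b. a \<in> A \<and> b \<in> B}"

text \<open>L_U(A), where l = dim (U \<inter> T).\<close>
definition L_U :: "'a::euclidean_space set \<Rightarrow> (nat \<Rightarrow> 'a) \<Rightarrow> nat \<Rightarrow> 'a set set" where
  "L_U U \<alpha> m = {X \<in> int_lattice_codim \<alpha> m (dim U - dim (U \<inter> centre \<alpha> m)).
      direct_sum_whole X (U \<inter> subspace_sum (orthogonal_comp U) (orthogonal_comp (centre \<alpha> m)))}"

end

theory Submission
  imports Defs
begin

text \<open>Write \<open>P\<close> for the orthogonal projection onto \<open>U\<close>, \<open>\<beta>\<^sub>i = P \<alpha>\<^sub>i\<close> and
  \<open>W = span {\<beta>\<^sub>i}\<close>. For \<open>v \<in> U\<close> we have \<open>\<langle>\<alpha>\<^sub>i, v\<rangle> = \<langle>\<beta>\<^sub>i, v\<rangle>\<close>, so inside \<open>U\<close> every flat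
  \<open>X\<^sub>J = \<Inter>\<^sub>i\<^sub>\<in>\<^sub>J H\<^sub>i\<close> is the orthogonal complement of \<open>span {\<beta>\<^sub>i : i \<in> J}\<close>. With \<open>J = [m]\<close>
  this says that \<open>U \<inter> T\<close> is the orthogonal complement of \<open>W\<close> in \<open>U\<close>, hence \<open>dim W = k - l\<close>;
  moreover \<open>U \<inter> (U\<^sup>\<bottom> + T\<^sup>\<bottom>) = P(T\<^sup>\<bottom>) = W\<close>. The bases of the vector matroid of the \<open>\<beta>\<^sub>i\<close> are
  the independent subfamilies of size \<open>dim W\<close>, giving (1) \<open>\<Leftrightarrow>\<close> (2). For \<open>|I| = dim W\<close>,
  \<open>X\<^sub>I \<inter> W = W \<inter> {\<beta>\<^sub>i : i \<in> I}\<^sup>\<bottom>\<close> is trivial iff the \<open>\<beta>\<^sub>i\<close>, \<open>i \<in> I\<close>, span \<open>W\<close>, and then the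
  codimension of \<open>X\<^sub>I\<close>, the rank of \<open>{\<alpha>\<^sub>i : i \<in> I}\<close>, is squeezed between the rank of the
  \<open>\<beta>\<^sub>i\<close> and \<open>|I|\<close>; so \<open>X\<^sub>I\<close> is a complement of \<open>W\<close> exactly when (2) holds.\<close>

lemma closest_point_in_subspace:
  fixes U :: "'a::euclidean_space set"
  assumes "subspace U"
  shows "closest_point U x \<in> U"
  using assms by (metis closed_subspace closest_point_in_set empty_iff subspace_0)

lemma closest_point_subspace_orthogonal:
  fixes U :: "'a::euclidean_space set"
  assumes "subspace U" "y \<in> U"
  shows "(x - closest_point U x) \<bullet> y = 0"
proof -
  let ?p = "closest_point U x"
  have p: "?p \<in> U" using closest_point_in_subspace[OF assms(1)] .
  have cvx: "convex U" and cl: "closed U"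
    using assms(1) by (simp_all add: subspace_imp_convex closed_subspace)
  have "?p + y \<in> U" "?p - y \<in> U" using p assms by (simp_all add: subspace_add subspace_diff)
  then have "(x - ?p) \<bullet> y \<le> 0" "(x - ?p) \<bullet> y \<ge> 0"
    using closest_point_dot[OF cvx cl, of _ x] by force+
  then show ?thesis by linarith
qed

lemma inner_closest_point_subspace:
  fixes U :: "'a::euclidean_space set"
  assumes "subspace U" "y \<in> U"
  shows "closest_point U x \<bullet> y = x \<bullet> y"
  using closest_point_subspace_orthogonal[OF assms, of x] by (simp add: inner_diff_left)

lemma closest_point_subspace_unique:
  fixes U :: "'a::euclidean_space set"
  assumes "subspace U" "p \<in> U" "\<And>y. y \<in> U \<Longrightarrow> (x - p) \<bullet> y = 0"
  shows "closest_point U x = p"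
proof -
  let ?q = "closest_point U x"
  have d: "p - ?q \<in> U"
    using closest_point_in_subspace[OF assms(1)] assms(1,2) by (simp add: subspace_diff)
  have "(p - ?q) \<bullet> (p - ?q) = (x - ?q) \<bullet> (p - ?q) - (x - p) \<bullet> (p - ?q)"
    by (simp add: algebra_simps)
  also have "\<dots> = 0"
    using closest_point_subspace_orthogonal[OF assms(1) d] assms(3)[OF d] by simp
  finally show ?thesis by simp
qed

lemma linear_closest_point_subspace:
  fixes U :: "'a::euclidean_space set"
  assumes "subspace U"
  shows "linear (closest_point U)"
proof (rule linearI)
  note in_U = closest_point_in_subspace[OF assms]
  note orth = closest_point_subspace_orthogonal[OF assms]
  fix x y
  show "closest_point U (x + y) = closest_point U x + closest_point U y"
  proof (rule closest_point_subspace_unique[OF assms])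
    show "closest_point U x + closest_point U y \<in> U"
      using in_U assms by (simp add: subspace_add)
    fix z assume "z \<in> U"
    then show "(x + y - (closest_point U x + closest_point U y)) \<bullet> z = 0"
      using orth[of z x] orth[of z y] by (simp add: algebra_simps inner_diff_left inner_add_left)
  qed
next
  note in_U = closest_point_in_subspace[OF assms]
  note orth = closest_point_subspace_orthogonal[OF assms]
  fix c :: real and x
  show "closest_point U (c *\<^sub>R x) = c *\<^sub>R closest_point U x"
  proof (rule closest_point_subspace_unique[OF assms])
    show "c *\<^sub>R closest_point U x \<in> U"
      using in_U assms by (simp add: subspace_scale)
    fix z assume "z \<in> U"
    then show "(c *\<^sub>R x - c *\<^sub>R closest_point U x) \<bullet> z = 0"
      using orth[of z x] by (simp flip: scaleR_diff_right)
  qed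
qed

lemma family_indep_iff_dim_eq_card:
  fixes f :: "nat \<Rightarrow> 'a::euclidean_space"
  assumes "finite I"
  shows "family_indep f I \<longleftrightarrow> dim (f ` I) = card I"
proof
  assume "family_indep f I"
  then show "dim (f ` I) = card I"
    unfolding family_indep_def by (simp add: dim_eq_card_independent card_image)
next
  assume dim_eq: "dim (f ` I) = card I"
  have "dim (f ` I) \<le> card (f ` I)" "card (f ` I) \<le> card I"
    using assms by (simp_all add: dim_le_card' card_image_le)
  then have card_eq: "card (f ` I) = card I" using dim_eq by linarith
  then have "inj_on f I" using assms by (simp add: eq_card_imp_inj_on)
  moreover have "independent (f ` I)"
    using card_eq_dim[of "f ` I" "f ` I"] card_eq dim_eq assms by (simp add: span_superset)
  ultimately show "family_indep f I" unfolding family_indep_def by simp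
qed

lemma maximal_family_indep_iff_card_eq_dim:
  fixes f :: "nat \<Rightarrow> 'a::euclidean_space"
  assumes "finite E" "I \<subseteq> E" "family_indep f I"
  shows "(\<forall>J. J \<subseteq> E \<and> family_indep f J \<and> I \<subseteq> J \<longrightarrow> J = I) \<longleftrightarrow> card I = dim (f ` E)"
proof -
  have fin: "finite J" if "J \<subseteq> E" for J using assms(1) that finite_subset by blast
  have dim_J: "dim (f ` J) \<le> dim (f ` E)" if "J \<subseteq> E" for J
    using that by (intro dim_subset) blast
  have dim_I: "dim (f ` I) = card I"
    using assms(3) family_indep_iff_dim_eq_card fin[OF assms(2)] by blast
  show ?thesis
  proof
    assume maximal: "\<forall>J. J \<subseteq> E \<and> family_indep f J \<and> I \<subseteq> J \<longrightarrow> J = I"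
    show "card I = dim (f ` E)"
    proof (rule ccontr)
      assume "card I \<noteq> dim (f ` E)"
      then have "dim (f ` E) > dim (span (f ` I))"
        using dim_I dim_J[OF assms(2)] by simp
      then have "\<not> f ` E \<subseteq> span (f ` I)"
        using dim_subset[of "f ` E" "span (f ` I)"] by linarith
      then obtain j where j: "j \<in> E" "f j \<notin> span (f ` I)" by blast
      then have "j \<notin> I" by (auto simp: span_base)
      have "dim (f ` insert j I) = card (insert j I)"
        using dim_insert[of "f j" "f ` I"] j(2) dim_I \<open>j \<notin> I\<close> fin[OF assms(2)] by simp
      moreover have "insert j I \<subseteq> E" using j(1) assms(2) by blast
      ultimately have "family_indep f (insert j I)"
        using family_indep_iff_dim_eq_card fin by blast
      then show False using maximal \<open>insert j I \<subseteq> E\<close> \<open>j \<notin> I\<close> by blast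
    qed
  next
    assume card_I: "card I = dim (f ` E)"
    show "\<forall>J. J \<subseteq> E \<and> family_indep f J \<and> I \<subseteq> J \<longrightarrow> J = I"
    proof (intro allI impI, elim conjE)
      fix J assume J: "J \<subseteq> E" "family_indep f J" "I \<subseteq> J"
      have "card J \<le> card I"
        using dim_J[OF J(1)] card_I family_indep_iff_dim_eq_card[OF fin[OF J(1)], of f] J(2)
        by simp
      with card_seteq[OF fin[OF J(1)] J(3)] show "J = I" by simp
    qed
  qed
qed

lemma subspace_Int_orthogonal_comp_eq_0_iff:
  fixes A W :: "'a::euclidean_space set"
  assumes "subspace A" "subspace W" "A \<subseteq> W"
  shows "W \<inter> orthogonal_comp A = {0} \<longleftrightarrow> dim A = dim W"
proof -
  have eq: "{y \<in> W. \<forall>x\<in>A. orthogonal x y} = W \<inter> orthogonal_comp A"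
    by (auto simp: orthogonal_comp_def)
  have "0 \<in> W \<inter> orthogonal_comp A"
    by (simp add: assms(2) subspace_0 subspace_orthogonal_comp)
  then have "W \<inter> orthogonal_comp A = {0} \<longleftrightarrow> dim (W \<inter> orthogonal_comp A) = 0"
    unfolding dim_eq_0 by blast
  moreover have "dim (W \<inter> orthogonal_comp A) + dim A = dim W"
    using dim_subspace_orthogonal_to_vectors[OF assms] eq by simp
  ultimately show ?thesis by (simp del: dim_eq_0) linarith
qed

lemma direct_sum_wholeI_dim:
  fixes X W :: "'a::euclidean_space set"
  assumes "subspace X" "subspace W" "X \<inter> W = {0}" "dim X + dim W = DIM('a)"
  shows "direct_sum_whole X W"
proof -
  let ?S = "{x + w |x w. x \<in> X \<and> w \<in> W}"
  have "span ?S = ?S" using subspace_sums[OF assms(1,2)] by simp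
  moreover have "span ?S = UNIV"
    using dim_sums_Int[OF assms(1,2)] assms(3,4) by (simp add: dim_eq_full)
  ultimately show ?thesis using assms(3) unfolding direct_sum_whole_def by simp
qed

lemma flat_eq_orthogonal_comp_span:
  fixes \<alpha> :: "nat \<Rightarrow> 'a::euclidean_space"
  shows "flat \<alpha> J = orthogonal_comp (span (\<alpha> ` J))"
proof -
  have "x \<bullet> y = 0" if "x \<in> span (\<alpha> ` J)" "\<forall>i\<in>J. \<alpha> i \<bullet> y = 0" for x y
    using orthogonal_to_span[OF that(1), of y] that(2)
    by (auto simp: orthogonal_def inner_commute[of y])
  then show ?thesis
    unfolding flat_def hyp_def orthogonal_comp_def
    by (auto simp: orthogonal_def span_base)
qed

lemma codim_flat:
  fixes \<alpha> :: "nat \<Rightarrow> 'a::euclidean_space"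
  shows "DIM('a) - dim (flat \<alpha> J) = dim (\<alpha> ` J)"
  using dim_subspace_orthogonal_to_vectors[of "span (\<alpha> ` J)" UNIV]
  by (simp add: flat_eq_orthogonal_comp_span orthogonal_comp_def)

lemma inner_proj_vec:
  fixes U :: "'a::euclidean_space set"
  assumes "subspace U" "y \<in> U"
  shows "proj_vec U \<alpha> i \<bullet> y = \<alpha> i \<bullet> y"
  unfolding proj_vec_def using inner_closest_point_subspace[OF assms] .

lemma subspace_Int_flat_proj_vec:
  fixes U :: "'a::euclidean_space set"
  assumes "subspace U"
  shows "U \<inter> flat \<alpha> J = U \<inter> flat (proj_vec U \<alpha>) J"
  using inner_proj_vec[OF assms] by (auto simp: flat_def hyp_def)

lemma proj_vec_in_subspace:
  fixes U :: "'a::euclidean_space set"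
  assumes "subspace U"
  shows "proj_vec U \<alpha> i \<in> U"
  unfolding proj_vec_def using closest_point_in_subspace[OF assms] .

lemma span_proj_vec_subset:
  fixes U :: "'a::euclidean_space set"
  assumes "subspace U"
  shows "span (proj_vec U \<alpha> ` J) \<subseteq> U"
  using proj_vec_in_subspace[OF assms] assms by (intro span_minimal) auto

lemma dim_proj_vec_image:
  fixes U :: "'a::euclidean_space set"
  assumes "subspace U"
  shows "dim (proj_vec U \<alpha> ` J) = dim U - dim (U \<inter> flat \<alpha> J)"
proof -
  let ?B = "span (proj_vec U \<alpha> ` J)"
  have "U \<inter> flat \<alpha> J = U \<inter> orthogonal_comp ?B"
    using subspace_Int_flat_proj_vec[OF assms, of \<alpha> J] by (simp add: flat_eq_orthogonal_comp_span)
  then have "{y \<in> U. \<forall>x\<in>?B. orthogonal x y} = U \<inter> flat \<alpha> J"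
    by (auto simp: orthogonal_comp_def)
  then show ?thesis
    using dim_subspace_orthogonal_to_vectors
      [OF subspace_span assms span_proj_vec_subset[OF assms, of \<alpha> J]]
    by simp
qed

lemma subspace_Int_orthogonal_sum_eq_span_proj_vec:
  fixes U :: "'a::euclidean_space set"
  assumes "subspace U"
  shows "U \<inter> subspace_sum (orthogonal_comp U) (orthogonal_comp (flat \<alpha> J))
    = span (proj_vec U \<alpha> ` J)"
proof -
  let ?P = "closest_point U"
  have lin: "linear ?P" using linear_closest_point_subspace[OF assms] .
  have perp_flat: "orthogonal_comp (flat \<alpha> J) = span (\<alpha> ` J)"
    by (simp add: flat_eq_orthogonal_comp_span orthogonal_comp_self)
  have span_eq: "span (proj_vec U \<alpha> ` J) = ?P ` span (\<alpha> ` J)"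
    using span_linear_image[OF lin, of "\<alpha> ` J"] by (simp add: proj_vec_def image_image)
  show ?thesis
    unfolding span_eq perp_flat
  proof (intro equalityI subsetI)
    fix z assume "z \<in> U \<inter> subspace_sum (orthogonal_comp U) (span (\<alpha> ` J))"
    then obtain a b where z: "z \<in> U" and ab: "a \<in> orthogonal_comp U" "b \<in> span (\<alpha> ` J)"
      "z = a + b"
      unfolding subspace_sum_def by blast
    have "?P b = z"
    proof (rule closest_point_subspace_unique[OF assms z])
      fix y assume "y \<in> U"
      then have "a \<bullet> y = 0"
        using ab(1) unfolding orthogonal_comp_def orthogonal_def by (simp add: inner_commute[of a])
      then show "(b - z) \<bullet> y = 0" using ab(3) by (simp add: inner_diff_left)
    qed
    then show "z \<in> ?P ` span (\<alpha> ` J)" using ab(2) by blast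
  next
    fix z assume "z \<in> ?P ` span (\<alpha> ` J)"
    then obtain b where b: "b \<in> span (\<alpha> ` J)" "z = ?P b" by blast
    have "y \<bullet> (z - b) = 0" if "y \<in> U" for y
      using closest_point_subspace_orthogonal[OF assms that, of b] b(2)
      by (simp add: inner_diff_left inner_diff_right inner_commute)
    then have "z - b \<in> orthogonal_comp U"
      unfolding orthogonal_comp_def orthogonal_def by blast
    then have "z \<in> subspace_sum (orthogonal_comp U) (span (\<alpha> ` J))"
      unfolding subspace_sum_def using b(1) by force
    then show "z \<in> U \<inter> subspace_sum (orthogonal_comp U) (span (\<alpha> ` J))"
      using b(2) closest_point_in_subspace[OF assms] by blast
  qed
qed

lemma flat_Int_span_proj_vec_eq_0_iff:
  fixes U :: "'a::euclidean_space set"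
  assumes "subspace U" "I \<subseteq> J"
  shows "flat \<alpha> I \<inter> span (proj_vec U \<alpha> ` J) = {0} \<longleftrightarrow>
    dim (proj_vec U \<alpha> ` I) = dim (proj_vec U \<alpha> ` J)"
proof -
  let ?W = "span (proj_vec U \<alpha> ` J)"
  have "flat \<alpha> I \<inter> ?W = ?W \<inter> orthogonal_comp (span (proj_vec U \<alpha> ` I))"
    using subspace_Int_flat_proj_vec[OF assms(1), of \<alpha> I]
      span_proj_vec_subset[OF assms(1), of \<alpha> J]
    by (auto simp: flat_eq_orthogonal_comp_span)
  moreover have "span (proj_vec U \<alpha> ` I) \<subseteq> ?W" using assms(2) by (intro span_mono) blast
  ultimately show ?thesis
    using subspace_Int_orthogonal_comp_eq_0_iff[of "span (proj_vec U \<alpha> ` I)" ?W] by simp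
qed

lemma dim_proj_vec_image_le:
  fixes U :: "'a::euclidean_space set"
  assumes "subspace U"
  shows "dim (proj_vec U \<alpha> ` I) \<le> dim (\<alpha> ` I)"
proof -
  have "proj_vec U \<alpha> ` I = closest_point U ` \<alpha> ` I" by (auto simp: proj_vec_def)
  then show ?thesis using dim_image_le[OF linear_closest_point_subspace[OF assms]] by simp
qed

lemma mindep_iff_family_indep:
  fixes U :: "'a::euclidean_space set"
  shows "mindep U \<alpha> m J \<longleftrightarrow> J \<subseteq> {1..m} \<and> family_indep (proj_vec U \<alpha>) J"
  using family_indep_iff_dim_eq_card[of J "proj_vec U \<alpha>"] finite_subset[of J "{1..m}"]
  unfolding mindep_def mrank_def by auto

lemma mbasis_iff_card_family_indep:
  fixes U :: "'a::euclidean_space set"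
  assumes "subspace U" "I \<subseteq> {1..m}"
  shows "mbasis U \<alpha> m I \<longleftrightarrow>
    card I = dim U - dim (U \<inter> centre \<alpha> m) \<and> family_indep (proj_vec U \<alpha>) I"
  using maximal_family_indep_iff_card_eq_dim[of "{1..m}" I "proj_vec U \<alpha>"]
    dim_proj_vec_image[OF assms(1), of \<alpha> "{1..m}"] assms(2)
  unfolding mbasis_def mindep_iff_family_indep centre_def by auto

lemma flat_in_L_U_iff_family_indep:
  fixes U :: "'a::euclidean_space set"
  assumes "subspace U" "I \<subseteq> {1..m}" and card_I: "card I = dim U - dim (U \<inter> centre \<alpha> m)"
  shows "flat \<alpha> I \<in> L_U U \<alpha> m \<longleftrightarrow> family_indep (proj_vec U \<alpha>) I"
proof -
  define \<beta> where "\<beta> = proj_vec U \<alpha>"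
  define W where "W = span (\<beta> ` {1..m})"
  have "finite I" using assms(2) finite_subset by blast
  have dim_W: "dim W = card I"
    using dim_proj_vec_image[OF assms(1)] card_I by (simp add: W_def \<beta>_def centre_def)
  have L_U_iff: "flat \<alpha> I \<in> L_U U \<alpha> m \<longleftrightarrow>
      DIM('a) - dim (flat \<alpha> I) = card I \<and> direct_sum_whole (flat \<alpha> I) W"
    using subspace_Int_orthogonal_sum_eq_span_proj_vec[OF assms(1), of \<alpha> "{1..m}"] assms(2)
    by (auto simp: L_U_def int_lattice_codim_def int_lattice_def card_I W_def \<beta>_def
        centre_def)
  have indep_iff: "family_indep \<beta> I \<longleftrightarrow> dim (\<beta> ` I) = card I"
    using family_indep_iff_dim_eq_card[OF \<open>finite I\<close>] .
  have Int_W_iff: "flat \<alpha> I \<inter> W = {0} \<longleftrightarrow> family_indep \<beta> I"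
    using flat_Int_span_proj_vec_eq_0_iff[OF assms(1,2), of \<alpha>] dim_W indep_iff
    by (simp add: W_def \<beta>_def)
  show ?thesis
    unfolding \<beta>_def[symmetric]
  proof
    assume "flat \<alpha> I \<in> L_U U \<alpha> m"
    then show "family_indep \<beta> I"
      using L_U_iff Int_W_iff unfolding direct_sum_whole_def by blast
  next
    assume indep: "family_indep \<beta> I"
    have "dim (\<alpha> ` I) \<le> card I"
      using \<open>finite I\<close> by (meson card_image_le dim_le_card' finite_imageI le_trans)
    then have codim: "DIM('a) - dim (flat \<alpha> I) = card I"
      using codim_flat[of \<alpha> I] dim_proj_vec_image_le[OF assms(1), of \<alpha> I] indep indep_iff
      by (simp add: \<beta>_def)
    have "direct_sum_whole (flat \<alpha> I) W"
    proof (rule direct_sum_wholeI_dim)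
      show "subspace (flat \<alpha> I)"
        by (simp add: flat_eq_orthogonal_comp_span subspace_orthogonal_comp)
      show "dim (flat \<alpha> I) + dim W = DIM('a)"
        using codim dim_W dim_subset_UNIV[of "flat \<alpha> I"] by linarith
    qed (use indep Int_W_iff in \<open>auto simp: W_def\<close>)
    then show "flat \<alpha> I \<in> L_U U \<alpha> m" using L_U_iff codim by blast
  qed
qed

theorem lemma3p3:
  fixes \<alpha> :: "nat \<Rightarrow> 'a::euclidean_space" and m k l :: nat
    and U :: "'a set" and I :: "nat set"
  assumes "\<forall>i\<in>{1..m}. \<alpha> i \<noteq> 0"
    and "subspace U" and "dim U = k"
    and "dim (U \<inter> centre \<alpha> m) = l"
    and "I \<subseteq> {1..m}"
  shows "(mbasis U \<alpha> m I \<longleftrightarrow> card I = k - l \<and> family_indep (proj_vec U \<alpha>) I)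
       \<and> (card I = k - l \<and> family_indep (proj_vec U \<alpha>) I
            \<longleftrightarrow> card I = k - l \<and> flat \<alpha> I \<in> L_U U \<alpha> m)"
  \<comment> \<open>The nonvanishing of the normals only ensures that the \<open>H\<^sub>i\<close> are hyperplanes;
    the equivalences do not need it.\<close>
  using mbasis_iff_card_family_indep[OF assms(2,5), where \<alpha> = \<alpha>]
    flat_in_L_U_iff_family_indep[OF assms(2,5), where \<alpha> = \<alpha>]
  unfolding assms(3,4) by blast

end
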